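(* Let $f$ satisfy $(\mathcal A)$ and let $p\ge1$. Let $x_0,y_{-1},y_0\in\mathcal H$ with $y_0\neq y_{-1}$, let $\tau_0=0$, and define recursively for $k\ge0$ $$\lambda_k=\|y_k-y_{k-1}\|^{-\frac{p-1}{p}},\quad y_{k+1}=\operatorname{prox}_{\lambda_k f}(y_k),\quad \tau_{k+1}=\tau_k+\lambda_k,\quad x_{k+1}=\Big(1-\frac{\lambda_k}{\tau_{k+1}}\Big)x_k+\frac{\lambda_k}{\tau_{k+1}}y_{k+1},$$ and assume $\nabla f(y_k)\neq0$ for all $k\ge0$. Then $f(x_k)-\inf_{\mathcal H}f=O\big(k^{-(2-\frac1p)}\big)$ as $k\to+\infty$, and $(x_k)_{k\ge0}$ converges weakly to an element of $S=\operatorname{argmin} f$.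
   Context: $\mathcal H$ is a real Hilbert space. Assumption $(\mathcal A)$: $f:\mathcal H\to\mathbb R$ is convex and continuously differentiable, $S=\operatorname{argmin}_{\mathcal H} f\neq\emptyset$, and $\nabla f$ is Lipschitz continuous on bounded subsets of $\mathcal H$. For $\lambda>0$, $\operatorname{prox}_{\lambda f}(y)=\operatorname{argmin}_{u\in\mathcal H}\{f(u)+\frac{1}{2\lambda}\|u-y\|^2\}$. *)

theory Defs
  imports "HOL-Analysis.Analysis" "HOL-Library.Landau_Symbols"
begin

definition prox :: "real \<Rightarrow> ('a::real_normed_vector \<Rightarrow> real) \<Rightarrow> 'a \<Rightarrow> 'a" where
  "prox lam f y = (THE u. \<forall>v. f u + (norm (u - y))\<^sup>2 / (2 * lam) \<le> f v + (norm (v - y))\<^sup>2 / (2 * lam))"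

definition weak_conv :: "(nat \<Rightarrow> 'a::real_inner) \<Rightarrow> 'a \<Rightarrow> bool" where
  "weak_conv x z \<longleftrightarrow> (\<forall>v. (\<lambda>k. x k \<bullet> v) \<longlonglongrightarrow> z \<bullet> v)"

end

(*
  Fix a minimizer z, put R = norm (y 0 - z) and g k = gradf (y (k + 1)), so that the proximal
  step reads y (k + 1) = y k - lam k * g k.  The energy
    tau k * (f (y k) - f z) + norm (y k - z)^2 / 2
  decreases along the scheme, dissipating (tau k * lam k + lam k^2 / 2) * norm (g k)^2, and
  norm (g k) is nonincreasing; as these weights sum to tau (k + 1)^2 / 2, this gives
  tau (k + 1) * norm (g k) <= R.  The step-size rule lam (k + 1) = (lam k * norm (g k)) powr
  (-(p - 1) / p) then keeps the steps from staying small, and tau k + tau (k + 1) grows like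
  k powr (2 - 1 / p).  By Jensen's inequality the averages x k satisfy
  tau k * (f (x k) - min f) <= R^2 / 2, which is the rate.

  For weak convergence, y is Fejer monotone with respect to argmin f, and every point common to
  the closed convex hulls of its tails is a minimizer; Opial's argument, run with these hulls
  instead of weak cluster points, yields a weak limit z in argmin f, and x, a Toeplitz average
  of y, converges weakly to the same z.
*)

theory Submission
  imports Defs
begin

section \<open>Convexity and the proximal map\<close>

lemma convex_on_gradient_ineq:
  fixes f :: "'a::real_inner \<Rightarrow> real"
  assumes convex: "convex_on UNIV f"
    and deriv: "(f has_derivative (\<lambda>h. g \<bullet> h)) (at u)"
  shows "f u + g \<bullet> (v - u) \<le> f v"
proof -
  define h where "h t = f (u + t *\<^sub>R (v - u))" for t :: real
  have "convex_on UNIV h"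
  proof (rule convex_onI)
    fix s t a :: real assume a: "0 < a" "a < 1"
    have "u + ((1 - a) *\<^sub>R s + a *\<^sub>R t) *\<^sub>R (v - u)
          = (1 - a) *\<^sub>R (u + s *\<^sub>R (v - u)) + a *\<^sub>R (u + t *\<^sub>R (v - u))"
      by (simp add: scaleR_add_right scaleR_diff_left scaleR_diff_right scaleR_add_left algebra_simps)
    then show "h ((1 - a) *\<^sub>R s + a *\<^sub>R t) \<le> (1 - a) * h s + a * h t"
      unfolding h_def using a convex_onD[OF convex, of a] by simp
  qed simp
  moreover have "(h has_real_derivative g \<bullet> (v - u)) (at 0)"
  proof -
    have "((\<lambda>t. u + t *\<^sub>R (v - u)) has_derivative (\<lambda>t. t *\<^sub>R (v - u))) (at 0)"
      by (intro derivative_eq_intros) auto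
    moreover have "(f has_derivative (\<lambda>h. g \<bullet> h)) (at (u + 0 *\<^sub>R (v - u)))"
      using deriv by simp
    ultimately have "(h has_derivative (\<lambda>t. g \<bullet> (t *\<^sub>R (v - u)))) (at 0)"
      unfolding h_def by (rule has_derivative_compose)
    then show ?thesis
      by (simp add: has_field_derivative_def mult.commute[of _ "g \<bullet> (v - u)"])
  qed
  ultimately have "h 1 - h 0 \<ge> g \<bullet> (v - u) * (1 - 0)"
    by (intro convex_on_imp_above_tangent) auto
  then show ?thesis unfolding h_def by simp
qed

lemma convex_sublevel:
  fixes f :: "'a::real_vector \<Rightarrow> real"
  assumes "convex_on UNIV f"
  shows "convex {v. f v \<le> t}"
proof (rule convexI)
  fix u v :: 'a and a b :: real
  assume uv: "u \<in> {v. f v \<le> t}" "v \<in> {v. f v \<le> t}" and ab: "0 \<le> a" "0 \<le> b" "a + b = 1"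
  have "f (a *\<^sub>R u + b *\<^sub>R v) \<le> a * f u + b * f v"
    using assms ab unfolding convex_on_def by simp
  also have "\<dots> \<le> a * t + b * t" using uv ab by (intro add_mono mult_left_mono) auto
  finally show "a *\<^sub>R u + b *\<^sub>R v \<in> {v. f v \<le> t}" using ab by (simp flip: distrib_right)
qed

lemma norm_midpoint_sq:
  fixes u v :: "'a::real_inner"
  shows "(norm (midpoint u v))\<^sup>2 = ((norm u)\<^sup>2 + (norm v)\<^sup>2) / 2 - (norm (u - v))\<^sup>2 / 4"
  unfolding power2_norm_eq_inner midpoint_def
  by (simp add: inner_add_left inner_add_right inner_diff_left inner_diff_right inner_commute
      field_simps)

lemma convex_midpoint_mem:
  assumes "convex K" "u \<in> K" "v \<in> K"
  shows "midpoint u v \<in> K"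
  using convexD[OF assms, of "1/2" "1/2"] by (simp add: midpoint_def scaleR_add_right)

definition strongly_midconvex_on :: "'a::real_normed_vector set \<Rightarrow> real \<Rightarrow> ('a \<Rightarrow> real) \<Rightarrow> bool" where
  "strongly_midconvex_on C c \<phi> \<longleftrightarrow> (\<forall>u\<in>C. \<forall>v\<in>C. midpoint u v \<in> C \<and>
      \<phi> (midpoint u v) \<le> (\<phi> u + \<phi> v) / 2 - c * (norm (u - v))\<^sup>2)"

lemma strongly_midconvex_on_minimizing_Cauchy:
  assumes sc: "strongly_midconvex_on C c \<phi>" and c: "c > 0"
    and s: "\<And>n. s n \<in> C" and lower: "\<And>u. u \<in> C \<Longrightarrow> m \<le> \<phi> u"
    and lim: "(\<lambda>n. \<phi> (s n)) \<longlonglongrightarrow> m"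
  shows "Cauchy s"
proof (rule metric_CauchyI)
  fix e :: real assume e: "e > 0"
  then have "c * e\<^sup>2 > 0" using c by simp
  with lim obtain N where N: "\<And>n. n \<ge> N \<Longrightarrow> \<phi> (s n) < m + c * e\<^sup>2"
    unfolding LIMSEQ_def dist_real_def by (fastforce simp: abs_less_iff)
  have "dist (s n) (s k) < e" if "n \<ge> N" "k \<ge> N" for n k
  proof -
    have "m \<le> \<phi> (midpoint (s n) (s k))"
      using sc s lower unfolding strongly_midconvex_on_def by blast
    also have "\<dots> \<le> (\<phi> (s n) + \<phi> (s k)) / 2 - c * (norm (s n - s k))\<^sup>2"
      using sc s unfolding strongly_midconvex_on_def by blast
    finally have "c * (norm (s n - s k))\<^sup>2 < c * e\<^sup>2"
      using N[OF \<open>n \<ge> N\<close>] N[OF \<open>k \<ge> N\<close>] by argo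
    then have "(norm (s n - s k))\<^sup>2 < e\<^sup>2" using c by simp
    then show ?thesis using e by (simp add: dist_norm power_less_imp_less_base)
  qed
  then show "\<exists>N. \<forall>n\<ge>N. \<forall>k\<ge>N. dist (s n) (s k) < e" by blast
qed

lemma strongly_midconvex_on_has_min:
  fixes \<phi> :: "'a::{real_normed_vector,complete_space} \<Rightarrow> real"
  assumes sc: "strongly_midconvex_on C c \<phi>" and c: "c > 0"
    and C: "closed C" "C \<noteq> {}" and cont: "continuous_on C \<phi>"
    and bdd: "bdd_below (\<phi> ` C)"
  shows "\<exists>u\<in>C. \<forall>v\<in>C. \<phi> u \<le> \<phi> v"
proof -
  define m where "m = Inf (\<phi> ` C)"
  have lower: "m \<le> \<phi> u" if "u \<in> C" for u
    unfolding m_def using bdd that by (simp add: cInf_lower)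
  have "\<exists>u\<in>C. \<phi> u < m + 1 / Suc n" for n
    using cInf_lessD[of "\<phi> ` C" "m + 1 / Suc n"] C(2) unfolding m_def by auto
  then obtain s where s: "\<And>n. s n \<in> C" and upper: "\<And>n. \<phi> (s n) < m + 1 / Suc n"
    by metis
  have lim: "(\<lambda>n. \<phi> (s n)) \<longlonglongrightarrow> m"
  proof (rule tendsto_sandwich[of "\<lambda>_. m" _ _ "\<lambda>n. m + 1 / Suc n"])
    show "(\<lambda>n. m + 1 / Suc n) \<longlonglongrightarrow> m"
      using tendsto_add[OF tendsto_const LIMSEQ_Suc[OF lim_inverse_n']] by simp
    show "eventually (\<lambda>n. \<phi> (s n) \<le> m + 1 / Suc n) sequentially"
      using upper by (simp add: less_imp_le)
  qed (use s lower in auto)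
  obtain u where u: "s \<longlonglongrightarrow> u"
    using strongly_midconvex_on_minimizing_Cauchy[OF sc c s lower lim] convergent_eq_Cauchy by blast
  have "u \<in> C" using closed_sequentially[OF C(1) s u] .
  moreover have "\<phi> u = m"
    using continuous_on_tendsto_compose[OF cont u \<open>u \<in> C\<close>] s lim LIMSEQ_unique by auto
  ultimately show ?thesis using lower by metis
qed

lemma strongly_midconvex_on_min_unique:
  assumes sc: "strongly_midconvex_on C c \<phi>" and c: "c > 0"
    and u: "u \<in> C" "\<forall>v\<in>C. \<phi> u \<le> \<phi> v"
    and w: "w \<in> C" "\<forall>v\<in>C. \<phi> w \<le> \<phi> v"
  shows "u = w"
proof -
  have "\<phi> u \<le> \<phi> (midpoint u w)" using u w sc unfolding strongly_midconvex_on_def by blast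
  also have "\<dots> \<le> (\<phi> u + \<phi> w) / 2 - c * (norm (u - w))\<^sup>2"
    using u w sc unfolding strongly_midconvex_on_def by blast
  finally have "c * (norm (u - w))\<^sup>2 \<le> 0" using u w by force
  with c show ?thesis by (simp add: mult_le_0_iff)
qed

lemma strongly_midconvex_on_norm_sq:
  fixes K :: "'a::real_inner set"
  assumes "convex K"
  shows "strongly_midconvex_on K (1/4) (\<lambda>w. (norm w)\<^sup>2)"
  unfolding strongly_midconvex_on_def norm_midpoint_sq
  using assms by (simp add: convex_midpoint_mem)

lemma strongly_midconvex_on_prox_objective:
  fixes f :: "'a::real_inner \<Rightarrow> real"
  assumes convex: "convex_on UNIV f" and lam: "lam > 0"
  shows "strongly_midconvex_on UNIV (1 / (8 * lam)) (\<lambda>u. f u + (norm (u - y))\<^sup>2 / (2 * lam))"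
  unfolding strongly_midconvex_on_def
proof (intro ballI conjI UNIV_I)
  fix u v :: 'a
  have "midpoint (u - y) (v - y) = midpoint u v - y"
    unfolding midpoint_eq_iff using midpoint_plus_self[of u v] by (simp add: algebra_simps)
  then have sq: "(norm (midpoint u v - y))\<^sup>2
      = ((norm (u - y))\<^sup>2 + (norm (v - y))\<^sup>2) / 2 - (norm (u - v))\<^sup>2 / 4"
    using norm_midpoint_sq[of "u - y" "v - y"] by simp
  have "f (midpoint u v) \<le> (f u + f v) / 2"
    using convex_onD[OF convex, of "1/2" u v] by (simp add: midpoint_def scaleR_add_right)
  moreover have "(norm (midpoint u v - y))\<^sup>2 / (2 * lam)
      = ((norm (u - y))\<^sup>2 / (2 * lam) + (norm (v - y))\<^sup>2 / (2 * lam)) / 2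
        - 1 / (8 * lam) * (norm (u - v))\<^sup>2"
    unfolding sq using lam by (simp add: field_simps)
  ultimately show "f (midpoint u v) + (norm (midpoint u v - y))\<^sup>2 / (2 * lam)
      \<le> (f u + (norm (u - y))\<^sup>2 / (2 * lam) + (f v + (norm (v - y))\<^sup>2 / (2 * lam))) / 2
         - 1 / (8 * lam) * (norm (u - v))\<^sup>2"
    by argo
qed

lemma prox_minimizes:
  fixes f :: "'a::{real_inner,complete_space} \<Rightarrow> real"
  assumes convex: "convex_on UNIV f" and cont: "continuous_on UNIV f"
    and bdd: "bdd_below (range f)" and lam: "lam > 0"
  shows "f (prox lam f y) + (norm (prox lam f y - y))\<^sup>2 / (2 * lam)
           \<le> f v + (norm (v - y))\<^sup>2 / (2 * lam)"
proof -
  define \<phi> where "\<phi> u = f u + (norm (u - y))\<^sup>2 / (2 * lam)" for u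
  have sc: "strongly_midconvex_on UNIV (1 / (8 * lam)) \<phi>"
    unfolding \<phi>_def using strongly_midconvex_on_prox_objective[OF convex lam] .
  have "continuous_on UNIV \<phi>"
    unfolding \<phi>_def using lam by (intro continuous_intros cont) auto
  moreover have "bdd_below (range \<phi>)"
  proof -
    obtain b where "\<And>u. b \<le> f u" using bdd by (auto simp: bdd_below_def)
    then have "\<And>u. b \<le> \<phi> u" unfolding \<phi>_def using lam by (simp add: add_increasing2)
    then show ?thesis by (auto simp: bdd_below_def)
  qed
  ultimately obtain u where u: "\<forall>v. \<phi> u \<le> \<phi> v"
    using strongly_midconvex_on_has_min[OF sc] lam by auto
  have "prox lam f y = (THE u. \<forall>v. \<phi> u \<le> \<phi> v)"
    unfolding prox_def \<phi>_def ..
  also have "\<dots> = u"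
    using strongly_midconvex_on_min_unique[OF sc] lam u by (intro the_equality) auto
  finally show ?thesis using u unfolding \<phi>_def by simp
qed

lemma prox_eq_gradient_step:
  fixes f :: "'a::{real_inner,complete_space} \<Rightarrow> real"
  assumes convex: "convex_on UNIV f"
    and grad: "\<And>u. (f has_derivative (\<lambda>h. gradf u \<bullet> h)) (at u)"
    and bdd: "bdd_below (range f)" and lam: "lam > 0"
  shows "prox lam f y = y - lam *\<^sub>R gradf (prox lam f y)"
proof -
  define u where "u = prox lam f y"
  define w where "w = lam *\<^sub>R gradf u + (u - y)"
  have "continuous_on UNIV f"
    by (intro continuous_at_imp_continuous_on ballI has_derivative_continuous[OF grad])
  then have "eventually (\<lambda>v. f u + (norm (u - y))\<^sup>2 / (2 * lam) \<le> f v + (norm (v - y))\<^sup>2 / (2 * lam)) (at u)"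
    unfolding u_def using prox_minimizes[OF convex _ bdd lam] by simp
  moreover have "((\<lambda>v. f v + (norm (v - y))\<^sup>2 / (2 * lam))
      has_derivative (\<lambda>h. gradf u \<bullet> h + (h \<bullet> (u - y) + (u - y) \<bullet> h) / (2 * lam))) (at u)"
    unfolding power2_norm_eq_inner by (intro derivative_eq_intros) (use lam grad in auto)
  ultimately have D: "(\<lambda>h. gradf u \<bullet> h + (h \<bullet> (u - y) + (u - y) \<bullet> h) / (2 * lam)) = (\<lambda>h. 0)"
    using has_derivative_local_min by blast
  have "gradf u \<bullet> w + (w \<bullet> (u - y)) / lam = 0"
    using fun_cong[OF D, of w] by (simp add: inner_commute)
  moreover have "w \<bullet> w = lam * (gradf u \<bullet> w) + (u - y) \<bullet> w"
    unfolding w_def[symmetric] by (simp add: w_def inner_add_left)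
  ultimately have "w \<bullet> w = 0"
    using lam by (simp add: field_simps inner_commute)
  then have "w = 0" by simp
  then show ?thesis unfolding u_def[symmetric] w_def by (simp add: algebra_simps)
qed

section \<open>Weak limits through closed convex hulls of tails\<close>

lemma min_norm_point_gap:
  fixes K :: "'a::real_inner set"
  assumes "convex K" "u \<in> K" "v \<in> K" and min: "\<And>w. w \<in> K \<Longrightarrow> (norm u)\<^sup>2 \<le> (norm w)\<^sup>2"
  shows "(norm (u - v))\<^sup>2 \<le> 2 * ((norm v)\<^sup>2 - (norm u)\<^sup>2)"
  using min[OF convex_midpoint_mem[OF assms(1-3)]] unfolding norm_midpoint_sq by argo

lemma Cauchy_if_dist_sq_le_tendsto_0:
  fixes w :: "nat \<Rightarrow> 'a::metric_space"
  assumes g: "g \<longlonglongrightarrow> 0" and gap: "\<And>n k. n \<le> k \<Longrightarrow> (dist (w n) (w k))\<^sup>2 \<le> g n"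
  shows "Cauchy w"
proof (rule metric_CauchyI)
  fix e :: real assume "e > 0"
  then obtain N where "\<forall>n\<ge>N. norm (g n - 0) < e\<^sup>2"
    using LIMSEQ_D[OF g, of "e\<^sup>2"] by auto
  then have N: "\<And>n. n \<ge> N \<Longrightarrow> g n < e\<^sup>2" by auto
  have "(dist (w n) (w k))\<^sup>2 < e\<^sup>2" if "N \<le> n" "N \<le> k" for n k
  proof (cases "n \<le> k")
    case True
    then show ?thesis using gap[OF True] N[OF \<open>N \<le> n\<close>] by linarith
  next
    case False
    then show ?thesis using gap[of k n] N[OF \<open>N \<le> k\<close>] by (simp add: dist_commute)
  qed
  then show "\<exists>N. \<forall>n\<ge>N. \<forall>k\<ge>N. dist (w n) (w k) < e"
    using \<open>e > 0\<close> by (metis less_imp_le power_less_imp_less_base)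
qed

lemma closed_convex_Inter_nonempty:
  fixes K :: "nat \<Rightarrow> 'a::{real_inner,complete_space} set"
  assumes closed: "\<And>n. closed (K n)" and convex: "\<And>n. convex (K n)"
    and nonempty: "\<And>n. K n \<noteq> {}" and nested: "decseq K"
    and bounded: "\<And>n. K n \<subseteq> cball 0 M"
  shows "\<exists>z. \<forall>n. z \<in> K n"
proof -
  have "\<exists>w\<in>K n. \<forall>v\<in>K n. (norm w)\<^sup>2 \<le> (norm v)\<^sup>2" for n
  proof (rule strongly_midconvex_on_has_min[OF strongly_midconvex_on_norm_sq[OF convex] _ closed nonempty])
    show "bdd_below ((\<lambda>w. (norm w)\<^sup>2) ` K n)" by (rule bdd_belowI[of _ 0]) auto
  qed (auto intro: continuous_intros)
  then obtain w where w: "\<And>n. w n \<in> K n" and wmin: "\<And>n v. v \<in> K n \<Longrightarrow> (norm (w n))\<^sup>2 \<le> (norm v)\<^sup>2"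
    by metis
  define m where "m n = (norm (w n))\<^sup>2" for n
  have "incseq m" unfolding incseq_def m_def using w wmin decseqD[OF nested] by blast
  moreover have "m n \<le> M\<^sup>2" for n
    using w bounded[of n] unfolding m_def by (force intro: power_mono)
  ultimately obtain L where L: "m \<longlonglongrightarrow> L"
    using incseq_convergent by metis
  have "(norm (w n - w k))\<^sup>2 \<le> 2 * (L - m n)" if "n \<le> k" for n k
  proof -
    have "w k \<in> K n" using w decseqD[OF nested that] by blast
    then have "(norm (w n - w k))\<^sup>2 \<le> 2 * (m k - m n)"
      unfolding m_def using min_norm_point_gap[OF convex w] wmin by blast
    then show ?thesis using incseq_le[OF \<open>incseq m\<close> L, of k] by argo
  qed
  moreover have "(\<lambda>n. 2 * (L - m n)) \<longlonglongrightarrow> 0"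
    using tendsto_mult[OF tendsto_const[of 2] tendsto_diff[OF tendsto_const[of L] L]] by simp
  ultimately have "Cauchy w"
    by (intro Cauchy_if_dist_sq_le_tendsto_0[where g = "\<lambda>n. 2 * (L - m n)"]) (simp_all add: dist_norm)
  then obtain z where z: "w \<longlonglongrightarrow> z" using convergent_eq_Cauchy by blast
  have "z \<in> K n" for n
  proof (rule closed_sequentially[OF closed])
    show "w (k + n) \<in> K n" for k using w decseqD[OF nested] by (meson le_add2 subsetD)
    show "(\<lambda>k. w (k + n)) \<longlonglongrightarrow> z" using z by (rule LIMSEQ_ignore_initial_segment)
  qed
  then show ?thesis by blast
qed

text \<open>By Mazur's lemma every weak cluster point of \<open>y\<close> lies in \<open>\<Inter>n. tail_hull y n\<close>; working
  with this set avoids the weak topology altogether.\<close>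
definition tail_hull :: "(nat \<Rightarrow> 'a::real_normed_vector) \<Rightarrow> nat \<Rightarrow> 'a set" where
  "tail_hull y n = closure (convex hull (y ` {n..}))"

lemma tail_hull_subset:
  assumes "closed K" "convex K" "\<And>k. k \<ge> n \<Longrightarrow> y k \<in> K"
  shows "tail_hull y n \<subseteq> K"
  unfolding tail_hull_def by (intro closure_minimal hull_minimal) (use assms in auto)

lemma tail_hull_subseq:
  assumes "strict_mono r"
  shows "tail_hull (y \<circ> r) n \<subseteq> tail_hull y n"
  unfolding tail_hull_def using seq_suble[OF assms] le_trans
  by (fastforce intro!: closure_mono hull_mono)

lemma tail_hull_common_point:
  fixes y :: "nat \<Rightarrow> 'a::{real_inner,complete_space}"
  assumes "bounded (range y)"
  shows "\<exists>w. \<forall>n. w \<in> tail_hull y n"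
proof -
  obtain M where M: "\<And>k. norm (y k) \<le> M" using assms by (auto simp: bounded_iff)
  show ?thesis
  proof (rule closed_convex_Inter_nonempty)
    show "tail_hull y n \<subseteq> cball 0 M" for n using M by (intro tail_hull_subset) auto
    show "tail_hull y n \<noteq> {}" for n
      unfolding tail_hull_def using hull_subset closure_subset by fastforce
    show "decseq (tail_hull y)"
      unfolding tail_hull_def by (intro decseq_SucI closure_mono hull_mono) auto
  qed (simp_all add: tail_hull_def)
qed

lemma tail_hull_inner_eq_limit:
  fixes y :: "nat \<Rightarrow> 'a::real_inner"
  assumes lim: "(\<lambda>k. q \<bullet> y k) \<longlonglongrightarrow> L" and w: "\<And>n. w \<in> tail_hull y n"
  shows "q \<bullet> w = L"
proof -
  have "\<bar>q \<bullet> w - L\<bar> \<le> e" if "e > 0" for e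
  proof -
    obtain N where "\<And>k. k \<ge> N \<Longrightarrow> \<bar>q \<bullet> y k - L\<bar> < e"
      using lim \<open>e > 0\<close> unfolding LIMSEQ_def dist_real_def by blast
    then have "tail_hull y N \<subseteq> {z. q \<bullet> z \<le> L + e} \<inter> {z. q \<bullet> z \<ge> L - e}"
      by (intro tail_hull_subset closed_Int convex_Int closed_halfspace_le closed_halfspace_ge
          convex_halfspace_le convex_halfspace_ge) (fastforce simp: abs_less_iff)
    then show ?thesis using w[of N] by (auto simp: abs_le_iff)
  qed
  then show ?thesis by (metis field_le_epsilon abs_le_zero_iff add_0 eq_iff_diff_eq_0)
qed

lemma tail_hull_common_point_unique:
  fixes y :: "nat \<Rightarrow> 'a::real_inner"
  assumes conv: "convergent (\<lambda>k. (norm (y k - w))\<^sup>2)" "convergent (\<lambda>k. (norm (y k - w'))\<^sup>2)"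
    and hull: "\<And>n. w \<in> tail_hull y n" "\<And>n. w' \<in> tail_hull y n"
  shows "w = w'"
proof -
  obtain L L' where L: "(\<lambda>k. (norm (y k - w))\<^sup>2) \<longlonglongrightarrow> L" and L': "(\<lambda>k. (norm (y k - w'))\<^sup>2) \<longlonglongrightarrow> L'"
    using conv unfolding convergent_def by blast
  define q where "q = w' - w"
  have "q \<bullet> y k = ((norm (y k - w))\<^sup>2 - (norm (y k - w'))\<^sup>2 - w \<bullet> w + w' \<bullet> w') / 2" for k
    unfolding q_def power2_norm_eq_inner
    by (simp add: inner_diff_left inner_diff_right inner_commute algebra_simps)
  then have "(\<lambda>k. q \<bullet> y k) \<longlonglongrightarrow> (L - L' - w \<bullet> w + w' \<bullet> w') / 2"
    by (simp only:) (auto intro!: tendsto_intros L L')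
  then have "q \<bullet> w = q \<bullet> w'"
    using tail_hull_inner_eq_limit hull by metis
  then have "q \<bullet> q = 0" unfolding q_def by (simp add: inner_diff_right)
  then show ?thesis unfolding q_def by simp
qed

lemma inner_not_tendsto_imp_separated_subseq:
  fixes y :: "nat \<Rightarrow> 'a::real_inner"
  assumes "\<not> (\<lambda>k. y k \<bullet> v) \<longlonglongrightarrow> z \<bullet> v"
  obtains e s and r :: "nat \<Rightarrow> nat" where "e > 0" "strict_mono r" "\<And>k. s \<bullet> z + e \<le> s \<bullet> y (r k)"
proof -
  obtain e where e: "e > 0" and far: "\<And>N. \<exists>k\<ge>N. e \<le> \<bar>y k \<bullet> v - z \<bullet> v\<bar>"
    using assms unfolding LIMSEQ_def dist_real_def by (meson not_less)
  have "infinite {k. e \<le> \<bar>y k \<bullet> v - z \<bullet> v\<bar>}"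
    unfolding infinite_nat_iff_unbounded_le using far by blast
  moreover have "{k. e \<le> \<bar>y k \<bullet> v - z \<bullet> v\<bar>}
      = {k. v \<bullet> z + e \<le> v \<bullet> y k} \<union> {k. (- v) \<bullet> z + e \<le> (- v) \<bullet> y k}"
    by (auto simp: abs_if inner_commute[of v])
  ultimately have "infinite {k. v \<bullet> z + e \<le> v \<bullet> y k} \<or> infinite {k. (- v) \<bullet> z + e \<le> (- v) \<bullet> y k}"
    by (simp only: infinite_Un)
  then obtain s where "infinite {k. s \<bullet> z + e \<le> s \<bullet> y k}" by blast
  then obtain r :: "nat \<Rightarrow> nat" where "strict_mono r" "\<And>k. s \<bullet> z + e \<le> s \<bullet> y (r k)"
    using infinite_enumerate by blast
  then show thesis using that[OF e] by blast
qed

lemma tail_hull_opial: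
  fixes y :: "nat \<Rightarrow> 'a::{real_inner,complete_space}"
  assumes bounded: "bounded (range y)"
    and conv: "\<And>w. P w \<Longrightarrow> convergent (\<lambda>k. (norm (y k - w))\<^sup>2)"
    and cluster: "\<And>w. (\<And>n. w \<in> tail_hull y n) \<Longrightarrow> P w"
  shows "\<exists>z. P z \<and> weak_conv y z"
proof -
  obtain z where z: "\<And>n. z \<in> tail_hull y n"
    using tail_hull_common_point[OF bounded] by blast
  have "(\<lambda>k. y k \<bullet> v) \<longlonglongrightarrow> z \<bullet> v" for v
  proof (rule ccontr)
    assume "\<not> (\<lambda>k. y k \<bullet> v) \<longlonglongrightarrow> z \<bullet> v"
    then obtain e s and r :: "nat \<Rightarrow> nat"
      where e: "e > 0" and r: "strict_mono r" and far: "\<And>k. s \<bullet> z + e \<le> s \<bullet> y (r k)"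
      by (rule inner_not_tendsto_imp_separated_subseq) blast
    have "bounded (range (y \<circ> r))" using bounded by (rule bounded_subset) auto
    then obtain w where w: "\<And>n. w \<in> tail_hull (y \<circ> r) n"
      using tail_hull_common_point by blast
    then have w_hull: "\<And>n. w \<in> tail_hull y n" using tail_hull_subseq[OF r] by blast
    have "w = z"
      using tail_hull_common_point_unique[OF conv[OF cluster] conv[OF cluster] w_hull z] w_hull z .
    moreover have "tail_hull (y \<circ> r) 0 \<subseteq> {u. s \<bullet> u \<ge> s \<bullet> z + e}"
      using far by (intro tail_hull_subset closed_halfspace_ge convex_halfspace_ge) auto
    ultimately show False using w[of 0] e by auto
  qed
  then show ?thesis unfolding weak_conv_def using cluster z by blast
qed

section \<open>Weighted averages and growth of real sequences\<close>

lemma weighted_average_deviation_le: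
  fixes a b lam tau :: "nat \<Rightarrow> real"
  assumes lam: "\<And>k. lam k > 0" and tau_nonneg: "\<And>k. tau k \<ge> 0"
    and tau_Suc: "\<And>k. tau (Suc k) = tau k + lam k"
    and a_Suc: "\<And>k. a (Suc k) = (1 - lam k / tau (Suc k)) * a k + (lam k / tau (Suc k)) * b (Suc k)"
    and b_near: "\<And>k. k > N \<Longrightarrow> \<bar>b k - c\<bar> \<le> e"
  shows "tau (N + j) * \<bar>a (N + j) - c\<bar> \<le> tau N * \<bar>a N - c\<bar> + e * (tau (N + j) - tau N)"
proof (induction j)
  case (Suc j)
  define k where "k = N + j"
  have "tau (Suc k) > 0" using tau_nonneg[of k] lam[of k] tau_Suc[of k] by simp
  then have "tau (Suc k) * a (Suc k) = (tau (Suc k) - lam k) * a k + lam k * b (Suc k)"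
    unfolding a_Suc by (simp add: field_simps)
  then have eq: "tau (Suc k) * (a (Suc k) - c) = tau k * (a k - c) + lam k * (b (Suc k) - c)"
    using tau_Suc[of k] by (simp add: algebra_simps)
  have "tau (Suc k) * \<bar>a (Suc k) - c\<bar> = \<bar>tau k * (a k - c) + lam k * (b (Suc k) - c)\<bar>"
    unfolding eq[symmetric] abs_mult using tau_nonneg[of "Suc k"] by simp
  also have "\<dots> \<le> \<bar>tau k * (a k - c)\<bar> + \<bar>lam k * (b (Suc k) - c)\<bar>"
    by (rule abs_triangle_ineq)
  also have "\<dots> \<le> tau k * \<bar>a k - c\<bar> + lam k * e"
    using b_near[of "Suc k"] lam[of k] tau_nonneg[of k] by (simp add: abs_mult k_def)
  finally have "tau (Suc k) * \<bar>a (Suc k) - c\<bar> \<le> tau k * \<bar>a k - c\<bar> + lam k * e" .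
  then show ?case
    using Suc.IH tau_Suc[of k] unfolding k_def by (simp add: algebra_simps)
qed simp

lemma weighted_average_tendsto:
  fixes a b lam tau :: "nat \<Rightarrow> real"
  assumes lam: "\<And>k. lam k > 0" and tau_0: "tau 0 = 0"
    and tau_Suc: "\<And>k. tau (Suc k) = tau k + lam k"
    and a_Suc: "\<And>k. a (Suc k) = (1 - lam k / tau (Suc k)) * a k + (lam k / tau (Suc k)) * b (Suc k)"
    and b: "b \<longlonglongrightarrow> c" and tau: "filterlim tau at_top sequentially"
  shows "a \<longlonglongrightarrow> c"
proof (rule LIMSEQ_I)
  fix r :: real assume "r > 0"
  define e where "e = r / 3"
  have e: "e > 0" using \<open>r > 0\<close> by (simp add: e_def)
  have tau_nonneg: "tau k \<ge> 0" for k
    by (induction k) (use tau_0 tau_Suc lam in \<open>auto intro: add_nonneg_pos less_imp_le\<close>)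
  obtain N where N: "\<And>k. k > N \<Longrightarrow> \<bar>b k - c\<bar> \<le> e"
    using b e unfolding LIMSEQ_def dist_real_def by (meson less_imp_le order.strict_implies_order)
  define B where "B = tau N * \<bar>a N - c\<bar>"
  obtain M where M: "\<And>n. n \<ge> M \<Longrightarrow> tau n \<ge> B / e + 1"
    using tau unfolding filterlim_at_top eventually_sequentially by blast
  show "\<exists>n0. \<forall>n\<ge>n0. norm (a n - c) < r"
  proof (intro exI allI impI)
    fix n assume n: "n \<ge> max N M"
    then obtain j where j: "n = N + j" by (metis le_Suc_ex max.boundedE)
    have "B \<ge> 0" using tau_nonneg[of N] by (simp add: B_def)
    have "B + e \<le> e * tau n" using M[of n] n e by (simp add: field_simps)
    then have "B \<le> e * tau n" "tau n > 0"
      using \<open>B \<ge> 0\<close> e zero_less_mult_pos[of e "tau n"] by linarith+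
    have "tau n * \<bar>a n - c\<bar> \<le> B + e * (tau n - tau N)"
      using weighted_average_deviation_le[where a = a and b = b and N = N and j = j, OF lam tau_nonneg tau_Suc a_Suc N]
      unfolding j B_def .
    moreover have "e * (tau n - tau N) \<le> e * tau n"
      using e tau_nonneg[of N] by (simp add: right_diff_distrib)
    moreover have "tau n * (2 * e) = e * tau n + e * tau n" by (simp add: algebra_simps)
    ultimately have "tau n * \<bar>a n - c\<bar> \<le> tau n * (2 * e)"
      using \<open>B \<le> e * tau n\<close> by linarith
    then have "\<bar>a n - c\<bar> \<le> 2 * e"
      using \<open>tau n > 0\<close> by (simp add: mult_le_cancel_left_pos)
    then show "norm (a n - c) < r"
      using \<open>r > 0\<close> by (simp add: e_def)
  qed
qed

lemma powr_increment_le: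
  fixes n g :: real
  assumes g: "g \<ge> 1" and n: "n \<ge> 1"
  shows "(n + 1) powr g - n powr g \<le> g * 2 powr (g - 1) * n powr (g - 1)"
proof -
  have "((\<lambda>z. z powr g) has_real_derivative g * (n + 1) powr (g - 1)) (at (n + 1) within {0<..})"
    using has_real_derivative_powr[of "n + 1" g] n by (auto intro: has_field_derivative_at_within)
  then have "n powr g - (n + 1) powr g \<ge> g * (n + 1) powr (g - 1) * (n - (n + 1))"
    using n by (intro convex_on_imp_above_tangent[OF powr_convex[OF g]])
      (auto simp: interior_open convex_connected)
  then have "(n + 1) powr g - n powr g \<le> g * (n + 1) powr (g - 1)" by simp
  also have "\<dots> \<le> g * (2 * n) powr (g - 1)"
    using g n by (intro mult_left_mono powr_mono2) auto
  finally show ?thesis by (simp add: powr_mult)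
qed

text \<open>The discrete analogue of the differential inequality \<open>\<Phi>' \<ge> c * \<Phi> powr b\<close>, whose
  solutions grow like \<open>t powr (1 / (1 - b))\<close>.\<close>
lemma small_pos_mult_le_powr:
  fixes A K c b :: real
  assumes "A > 0" "K > 0" "c > 0" "0 \<le> b" "b < 1"
  shows "\<exists>C>0. C \<le> A \<and> C * K \<le> c * C powr b"
proof -
  define C where "C = min A ((c / K) powr (1 / (1 - b)))"
  have "C > 0" using assms by (simp add: C_def)
  have "C powr (1 - b) \<le> ((c / K) powr (1 / (1 - b))) powr (1 - b)"
    using \<open>C > 0\<close> assms by (intro powr_mono2) (auto simp: C_def)
  also have "\<dots> = c / K" using assms by (simp add: powr_powr)
  finally have "C powr (1 - b) * K \<le> c" using assms by (simp add: field_simps)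
  have "C * K = C powr b * (C powr (1 - b) * K)"
    using \<open>C > 0\<close> by (simp add: powr_add[symmetric] mult.assoc[symmetric])
  also have "\<dots> \<le> C powr b * c"
    using \<open>C powr (1 - b) * K \<le> c\<close> by (simp add: mult_left_mono)
  finally have "C * K \<le> c * C powr b" by (simp add: mult.commute)
  moreover have "C \<le> A" by (simp add: C_def)
  ultimately show ?thesis using \<open>C > 0\<close> by blast
qed

lemma powr_growth_of_increment_bound:
  fixes \<Phi> :: "nat \<Rightarrow> real"
  assumes \<Phi>_0: "\<Phi> 0 > 0" and c: "c > 0" and b: "0 \<le> b" "b < 1"
    and step: "\<And>k. \<Phi> k + c * \<Phi> k powr b \<le> \<Phi> (Suc k)"
  shows "\<exists>C>0. \<forall>k. C * real (Suc k) powr (1 / (1 - b)) \<le> \<Phi> k"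
proof -
  define g where "g = 1 / (1 - b)"
  have g: "g \<ge> 1" "g * b = g - 1"
    using b by (simp_all add: g_def field_simps)
  have "g * 2 powr (g - 1) > 0" using g by simp
  then obtain C where "C > 0" "C \<le> \<Phi> 0" and key: "C * (g * 2 powr (g - 1)) \<le> c * C powr b"
    using small_pos_mult_le_powr[OF \<Phi>_0 _ c b] by blast
  show ?thesis
  proof (intro exI conjI allI)
    fix k
    show "C * real (Suc k) powr (1 / (1 - b)) \<le> \<Phi> k"
      unfolding g_def[symmetric]
    proof (induction k)
      case (Suc k)
      define n where "n = real (Suc k)"
      define X where "X = C * n powr g"
      have "n \<ge> 1" "X > 0" using \<open>C > 0\<close> by (simp_all add: n_def X_def)
      have "X + c * X powr b \<le> \<Phi> k + c * \<Phi> k powr b"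
        using Suc.IH \<open>X > 0\<close> c b unfolding X_def n_def by (intro add_mono mult_left_mono powr_mono2) auto
      also have "\<dots> \<le> \<Phi> (Suc k)" by (rule step)
      finally have "X + c * X powr b \<le> \<Phi> (Suc k)" .
      moreover have "c * X powr b = c * C powr b * n powr (g - 1)"
        using \<open>C > 0\<close> \<open>n \<ge> 1\<close> by (simp add: X_def powr_mult powr_powr g)
      moreover have "C * (n + 1) powr g - C * n powr g \<le> C * (g * 2 powr (g - 1)) * n powr (g - 1)"
        using mult_left_mono[OF powr_increment_le[OF g(1) \<open>n \<ge> 1\<close>], of C] \<open>C > 0\<close>
        by (simp add: right_diff_distrib mult.assoc)
      moreover have "C * (g * 2 powr (g - 1)) * n powr (g - 1) \<le> c * C powr b * n powr (g - 1)"
        using key by (simp add: mult_right_mono)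
      ultimately have "C * (n + 1) powr g \<le> \<Phi> (Suc k)"
        unfolding X_def by linarith
      then show ?case by (simp add: n_def add.commute)
    qed (use \<open>C \<le> \<Phi> 0\<close> in simp)
  qed (rule \<open>C > 0\<close>)
qed

section \<open>The averaged proximal scheme\<close>

locale averaged_prox_scheme =
  fixes f :: "'a::{real_inner, complete_space} \<Rightarrow> real"
    and gradf :: "'a \<Rightarrow> 'a"
    and p :: real
    and x y :: "nat \<Rightarrow> 'a" and ym1 :: 'a
    and lam tau :: "nat \<Rightarrow> real"
  assumes convex: "convex_on UNIV f"
    and grad: "\<And>u. (f has_derivative (\<lambda>h. gradf u \<bullet> h)) (at u)"
    and minimizer_exists: "\<exists>z. \<forall>u. f z \<le> f u"
    and p: "p \<ge> 1"
    and y_init: "y 0 \<noteq> ym1"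
    and lam_def: "\<And>k. lam k = norm (y k - (if k = 0 then ym1 else y (k - 1))) powr (- ((p - 1) / p))"
    and y_Suc: "\<And>k. y (Suc k) = prox (lam k) f (y k)"
    and tau_0: "tau 0 = 0"
    and tau_Suc: "\<And>k. tau (Suc k) = tau k + lam k"
    and x_Suc: "\<And>k. x (Suc k) = (1 - lam k / tau (Suc k)) *\<^sub>R x k + (lam k / tau (Suc k)) *\<^sub>R y (Suc k)"
    and grad_nonzero: "\<And>k. gradf (y k) \<noteq> 0"
begin

definition G :: "nat \<Rightarrow> 'a" where "G k = gradf (y (Suc k))"

lemma bdd_below_f: "bdd_below (range f)"
  using minimizer_exists by (auto simp: bdd_below_def)

lemma f_continuous: "continuous_on UNIV f"
  by (intro continuous_at_imp_continuous_on ballI has_derivative_continuous[OF grad])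

text \<open>Since \<open>0 powr a = 0\<close>, positivity of the step needs \<open>y k \<noteq> y (k - 1)\<close>; the nonvanishing
  gradient provides it.\<close>
lemma lam_pos: "lam k > 0"
proof (induction k)
  case 0
  then show ?case using lam_def[of 0] y_init by simp
next
  case (Suc k)
  have "y (Suc k) = y k - lam k *\<^sub>R gradf (y (Suc k))"
    unfolding y_Suc by (rule prox_eq_gradient_step[OF convex grad bdd_below_f Suc])
  then have "y (Suc k) \<noteq> y k" using Suc grad_nonzero[of "Suc k"] by auto
  then show ?case using lam_def[of "Suc k"] by simp
qed

lemma y_diff_eq: "y k - y (Suc k) = lam k *\<^sub>R G k"
  using prox_eq_gradient_step[OF convex grad bdd_below_f lam_pos, of k "y k"]
  unfolding y_Suc[symmetric] G_def by (simp add: algebra_simps)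

lemma norm_y_diff: "norm (y k - y (Suc k)) = lam k * norm (G k)"
  unfolding y_diff_eq using lam_pos[of k] by simp

lemma gradient_ineq: "f u + gradf u \<bullet> (v - u) \<le> f v"
  by (rule convex_on_gradient_ineq[OF convex grad])

lemma f_y_descent: "f (y (Suc k)) + lam k * (norm (G k))\<^sup>2 \<le> f (y k)"
  using gradient_ineq[of "y (Suc k)" "y k"]
  unfolding y_diff_eq G_def[symmetric] by (simp add: power2_norm_eq_inner)

lemma f_y_antimono: "k \<le> n \<Longrightarrow> f (y n) \<le> f (y k)"
proof (induction n rule: dec_induct)
  case (step n)
  then show ?case using f_y_descent[of n] lam_pos[of n] by (smt (verit) mult_nonneg_nonneg zero_le_power2)
qed simp

lemma three_point:
  "lam k * (f (y (Suc k)) - f u)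
     \<le> ((norm (y k - u))\<^sup>2 - (norm (y (Suc k) - u))\<^sup>2 - (norm (y k - y (Suc k)))\<^sup>2) / 2"
proof -
  have "f (y (Suc k)) - f u \<le> G k \<bullet> (y (Suc k) - u)"
    using gradient_ineq[of "y (Suc k)" u] unfolding G_def by (simp add: inner_diff_right)
  then have "lam k * (f (y (Suc k)) - f u) \<le> (y k - y (Suc k)) \<bullet> (y (Suc k) - u)"
    using lam_pos[of k] unfolding y_diff_eq by (simp add: mult_left_mono)
  then show ?thesis using dot_norm[of "y k - y (Suc k)" "y (Suc k) - u"] by simp
qed

lemma tau_nonneg: "tau k \<ge> 0"
  by (induction k) (use tau_0 tau_Suc lam_pos in \<open>auto intro: add_nonneg_pos less_imp_le\<close>)

lemma tau_Suc_pos: "tau (Suc k) > 0"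
  using tau_nonneg[of k] lam_pos[of k] tau_Suc[of k] by simp

lemma tau_le_Suc: "tau k \<le> tau (Suc k)"
  using lam_pos[of k] tau_Suc[of k] by simp

definition xmin :: 'a where "xmin = (SOME z. \<forall>u. f z \<le> f u)"

lemma xmin_le: "f xmin \<le> f u"
  using someI_ex[OF minimizer_exists] unfolding xmin_def by blast

definition R :: real where "R = norm (y 0 - xmin)"

definition energy :: "nat \<Rightarrow> real" where
  "energy k = tau k * (f (y k) - f xmin) + (norm (y k - xmin))\<^sup>2 / 2"

lemma energy_nonneg: "energy k \<ge> 0"
  unfolding energy_def using tau_nonneg[of k] xmin_le[of "y k"] by simp

definition weight :: "nat \<Rightarrow> real" where "weight k = tau k * lam k + (lam k)\<^sup>2 / 2"

lemma weight_nonneg: "weight k \<ge> 0"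
  using tau_nonneg[of k] lam_pos[of k] by (simp add: weight_def)

lemma sum_weight: "(\<Sum>k<n. weight k) = (tau n)\<^sup>2 / 2"
  by (induction n) (simp_all add: weight_def tau_0 tau_Suc power2_eq_square algebra_simps)

lemma energy_Suc_le: "energy (Suc k) + weight k * (norm (G k))\<^sup>2 \<le> energy k"
proof -
  have "tau k * (f (y (Suc k)) - f xmin + lam k * (norm (G k))\<^sup>2) \<le> tau k * (f (y k) - f xmin)"
    using f_y_descent[of k] tau_nonneg[of k] by (intro mult_left_mono) auto
  moreover have "lam k * (f (y (Suc k)) - f xmin)
      \<le> ((norm (y k - xmin))\<^sup>2 - (norm (y (Suc k) - xmin))\<^sup>2 - (lam k)\<^sup>2 * (norm (G k))\<^sup>2) / 2"
    using three_point[of k xmin] unfolding norm_y_diff by (simp add: power_mult_distrib)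
  ultimately show ?thesis
    unfolding energy_def weight_def tau_Suc by (simp add: algebra_simps)
qed

lemma energy_sum_le: "energy n + (\<Sum>k<n. weight k * (norm (G k))\<^sup>2) \<le> R\<^sup>2 / 2"
proof (induction n)
  case 0
  then show ?case by (simp add: energy_def R_def tau_0)
next
  case (Suc n)
  then show ?case using energy_Suc_le[of n] by simp
qed

lemma norm_G_le_Suc: "norm (G (Suc k)) \<le> norm (G k)"
proof -
  define a b where "a = y (Suc k)" and "b = y (Suc (Suc k))"
  have "(gradf b - gradf a) \<bullet> (a - b) \<le> 0"
    using gradient_ineq[of a b] gradient_ineq[of b a] by (simp add: inner_diff_left inner_diff_right)
  moreover have "a - b = lam (Suc k) *\<^sub>R gradf b"
    using y_diff_eq[of "Suc k"] unfolding a_def b_def G_def by simp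
  ultimately have "gradf b \<bullet> gradf b \<le> gradf a \<bullet> gradf b"
    using lam_pos[of "Suc k"] by (simp add: mult_le_0_iff inner_diff_left)
  also have "\<dots> \<le> norm (gradf a) * norm (gradf b)"
    by (rule Cauchy_Schwarz_ineq2[THEN abs_le_D1])
  finally have "norm (gradf b) * norm (gradf b) \<le> norm (gradf a) * norm (gradf b)"
    by (simp add: power2_norm_eq_inner[symmetric] power2_eq_square)
  then show ?thesis
    using grad_nonzero[of "Suc (Suc k)"] unfolding G_def a_def b_def by simp
qed

lemma norm_G_antimono: "k \<le> n \<Longrightarrow> norm (G n) \<le> norm (G k)"
  by (induction n rule: dec_induct) (auto intro: order_trans[OF norm_G_le_Suc])

lemma tau_norm_G_le: "tau (Suc n) * norm (G n) \<le> R"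
proof -
  have "(tau (Suc n) * norm (G n))\<^sup>2 / 2 = (\<Sum>k<Suc n. weight k * (norm (G n))\<^sup>2)"
    unfolding sum_distrib_right[symmetric] sum_weight by (simp add: power_mult_distrib)
  also have "\<dots> \<le> (\<Sum>k<Suc n. weight k * (norm (G k))\<^sup>2)"
    using norm_G_antimono weight_nonneg by (intro sum_mono mult_left_mono power_mono) auto
  also have "\<dots> \<le> R\<^sup>2 / 2" using energy_sum_le[of "Suc n"] energy_nonneg[of "Suc n"] by simp
  finally show ?thesis by (simp add: R_def power2_le_iff_abs_le)
qed

lemma R_pos: "R > 0"
proof -
  have "0 < tau (Suc 0) * norm (G 0)"
    using tau_Suc_pos[of 0] grad_nonzero[of 1] by (simp add: G_def)
  then show ?thesis using tau_norm_G_le[of 0] by linarith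
qed

lemma f_y_gap_le: "tau n * (f (y n) - f xmin) \<le> R\<^sup>2 / 2"
proof -
  have "0 \<le> (\<Sum>k<n. weight k * (norm (G k))\<^sup>2)"
    using weight_nonneg by (intro sum_nonneg mult_nonneg_nonneg) auto
  then show ?thesis
    using energy_sum_le[of n] zero_le_power2[of "norm (y n - xmin)"] unfolding energy_def by linarith
qed

lemma averaged_energy_le: "tau n * (f (x n) - f xmin) + (norm (y n - xmin))\<^sup>2 / 2 \<le> R\<^sup>2 / 2"
proof (induction n)
  case 0
  then show ?case by (simp add: tau_0 R_def)
next
  case (Suc k)
  define t where "t = lam k / tau (Suc k)"
  have "0 \<le> t" "t \<le> 1"
    using lam_pos[of k] tau_nonneg[of k] tau_Suc[of k] by (auto simp: t_def)
  then have "f (x (Suc k)) \<le> (1 - t) * f (x k) + t * f (y (Suc k))"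
    unfolding x_Suc t_def[symmetric] using convex_onD[OF convex] by simp
  then have "tau (Suc k) * f (x (Suc k)) \<le> tau (Suc k) * ((1 - t) * f (x k) + t * f (y (Suc k)))"
    using tau_Suc_pos[of k] by (simp add: mult_left_mono)
  also have "\<dots> = (tau (Suc k) - lam k) * f (x k) + lam k * f (y (Suc k))"
    using tau_Suc_pos[of k] by (simp add: t_def field_simps)
  also have "\<dots> = tau k * f (x k) + lam k * f (y (Suc k))"
    using tau_Suc[of k] by simp
  finally have "tau (Suc k) * f (x (Suc k)) \<le> tau k * f (x k) + lam k * f (y (Suc k))" .
  moreover have "lam k * (f (y (Suc k)) - f xmin) \<le> ((norm (y k - xmin))\<^sup>2 - (norm (y (Suc k) - xmin))\<^sup>2) / 2"
    using three_point[of k xmin] zero_le_power2[of "norm (y k - y (Suc k))"] by argo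
  ultimately show ?case using Suc.IH tau_Suc[of k] by (simp add: algebra_simps)
qed

lemma f_x_gap_le: "tau n * (f (x n) - f xmin) \<le> R\<^sup>2 / 2"
  using averaged_energy_le[of n] zero_le_power2[of "norm (y n - xmin)"] by argo

definition \<alpha> :: real where "\<alpha> = (p - 1) / p"

definition \<beta> :: real where "\<beta> = \<alpha> / (1 + \<alpha>)"

lemma \<alpha>_bounds: "0 \<le> \<alpha>" "\<alpha> < 1"
  using p by (auto simp: \<alpha>_def field_simps)

lemma \<beta>_bounds: "0 \<le> \<beta>" "\<beta> < 1"
  using \<alpha>_bounds by (auto simp: \<beta>_def field_simps)

lemma growth_exponent: "1 / (1 - \<beta>) = 2 - 1 / p"
  using p \<alpha>_bounds unfolding \<beta>_def \<alpha>_def by (simp add: field_simps)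

lemma lam_Suc_ge: "(tau (Suc k) / (R * lam k)) powr \<alpha> \<le> lam (Suc k)"
proof -
  have "norm (y (Suc k) - y k) = lam k * norm (G k)"
    using norm_y_diff[of k] by (simp add: norm_minus_commute)
  moreover have "norm (G k) \<le> R / tau (Suc k)"
    using tau_norm_G_le[of k] tau_Suc_pos[of k] by (simp add: field_simps)
  ultimately have "norm (y (Suc k) - y k) \<le> lam k * R / tau (Suc k)"
    using lam_pos[of k] mult_left_mono[of "norm (G k)" "R / tau (Suc k)" "lam k"] by simp
  moreover have "norm (y (Suc k) - y k) > 0"
    using norm_y_diff[of k] lam_pos[of k] grad_nonzero[of "Suc k"] by (simp add: G_def norm_minus_commute)
  ultimately have "(lam k * R / tau (Suc k)) powr (- \<alpha>) \<le> norm (y (Suc k) - y k) powr (- \<alpha>)"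
    using \<alpha>_bounds by (intro powr_mono2') auto
  moreover have "(lam k * R / tau (Suc k)) powr (- \<alpha>) = (tau (Suc k) / (R * lam k)) powr \<alpha>"
    by (simp add: powr_minus_divide powr_divide powr_mult)
  moreover have "norm (y (Suc k) - y k) powr (- \<alpha>) = lam (Suc k)"
    using lam_def[of "Suc k"] by (simp add: \<alpha>_def)
  ultimately show ?thesis by simp
qed

lemma tau_powr_\<beta>_le: "(tau (Suc k) / R) powr \<beta> \<le> max (lam k) (lam (Suc k))"
proof -
  define M where "M = max (lam k) (lam (Suc k))"
  have "M > 0" using lam_pos[of k] by (simp add: M_def)
  have "(tau (Suc k) / R) powr \<alpha> = (tau (Suc k) / (R * lam k)) powr \<alpha> * lam k powr \<alpha>"
    using lam_pos[of k] by (simp add: powr_mult[symmetric])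
  also have "\<dots> \<le> lam (Suc k) * lam k powr \<alpha>"
    using lam_Suc_ge[of k] by (simp add: mult_right_mono)
  also have "\<dots> \<le> M * M powr \<alpha>"
    using lam_pos[of k] \<alpha>_bounds by (intro mult_mono powr_mono2) (auto simp: M_def)
  also have "\<dots> = M powr (1 + \<alpha>)" using \<open>M > 0\<close> by (simp add: powr_add)
  finally have "((tau (Suc k) / R) powr \<alpha>) powr (1 / (1 + \<alpha>)) \<le> (M powr (1 + \<alpha>)) powr (1 / (1 + \<alpha>))"
    using \<alpha>_bounds by (intro powr_mono2) auto
  then show ?thesis
    using \<open>M > 0\<close> \<alpha>_bounds unfolding M_def \<beta>_def by (simp add: powr_powr)
qed

text \<open>Only the larger of two consecutive steps is controlled, hence the pairing of consecutive
  times.\<close>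
lemma tau_pair_increment:
  "tau (Suc k) + tau k + (1 / (2 * R)) powr \<beta> * (tau (Suc k) + tau k) powr \<beta>
     \<le> tau (Suc (Suc k)) + tau (Suc k)"
proof -
  have "(1 / (2 * R)) powr \<beta> * (tau (Suc k) + tau k) powr \<beta> = ((tau (Suc k) + tau k) / (2 * R)) powr \<beta>"
    by (simp add: powr_mult[symmetric])
  also have "\<dots> \<le> (tau (Suc k) / R) powr \<beta>"
    using tau_le_Suc[of k] tau_nonneg[of k] R_pos \<beta>_bounds by (intro powr_mono2) (auto simp: field_simps)
  also have "\<dots> \<le> lam k + lam (Suc k)"
    using tau_powr_\<beta>_le[of k] lam_pos[of k] lam_pos[of "Suc k"] by linarith
  finally show ?thesis using tau_Suc[of k] tau_Suc[of "Suc k"] by simp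
qed

lemma tau_growth: "\<exists>C>0. \<forall>k. C * real (Suc k) powr (2 - 1 / p) \<le> tau (Suc k)"
proof -
  obtain C where "C > 0" and C: "\<And>k. C * real (Suc k) powr (2 - 1 / p) \<le> tau (Suc k) + tau k"
    using powr_growth_of_increment_bound[of "\<lambda>k. tau (Suc k) + tau k", OF _ _ \<beta>_bounds tau_pair_increment]
      tau_Suc_pos[of 0] R_pos unfolding growth_exponent tau_0 by auto
  have "C / 2 * real (Suc k) powr (2 - 1 / p) \<le> tau (Suc k)" for k
    using C[of k] tau_le_Suc[of k] by simp
  then show ?thesis using \<open>C > 0\<close> by (intro exI[of _ "C / 2"]) auto
qed

lemma INF_f_eq: "(INF u. f u) = f xmin"
  by (rule cInf_eq_minimum) (auto simp: xmin_le)

lemma f_x_rate: "(\<lambda>k. f (x k) - (INF u. f u)) \<in> O(\<lambda>k. real k powr (- (2 - 1 / p)))"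
proof -
  define g where "g = 2 - 1 / p"
  obtain C where "C > 0" and C: "\<And>k. C * real (Suc k) powr g \<le> tau (Suc k)"
    using tau_growth unfolding g_def by blast
  have "norm (f (x k) - (INF u. f u)) \<le> R\<^sup>2 / (2 * C) * norm (real k powr (- g))" if "k \<ge> 1" for k
  proof -
    obtain j where j: "k = Suc j" using \<open>k \<ge> 1\<close> by (cases k) auto
    have "norm (f (x k) - (INF u. f u)) = f (x k) - f xmin"
      unfolding INF_f_eq using xmin_le by simp
    also have "\<dots> \<le> R\<^sup>2 / 2 / tau k"
      using f_x_gap_le[of k] tau_Suc_pos[of j] j by (simp add: field_simps)
    also have "\<dots> \<le> R\<^sup>2 / 2 / (C * real k powr g)"
      using C[of j] \<open>C > 0\<close> tau_Suc_pos[of j] j by (intro divide_left_mono mult_pos_pos) auto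
    also have "\<dots> = R\<^sup>2 / (2 * C) * norm (real k powr (- g))"
      by (simp add: powr_minus_divide)
    finally show ?thesis .
  qed
  then have "eventually (\<lambda>k. norm (f (x k) - (INF u. f u)) \<le> R\<^sup>2 / (2 * C) * norm (real k powr (- g))) at_top"
    unfolding eventually_at_top_linorder by blast
  then show ?thesis unfolding g_def by (rule bigoI)
qed

lemma tau_tendsto_at_top: "filterlim tau at_top sequentially"
proof -
  obtain C where "C > 0" and C: "\<And>k. C * real (Suc k) powr (2 - 1 / p) \<le> tau (Suc k)"
    using tau_growth by blast
  have "C * real k \<le> tau k" for k
  proof (cases k)
    case (Suc j)
    have "real k \<le> real k powr (2 - 1 / p)"
      using p Suc powr_mono[of 1 "2 - 1 / p" "real k"] by (simp add: field_simps)
    then have "C * real k \<le> C * real k powr (2 - 1 / p)" using \<open>C > 0\<close> by simp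
    then show ?thesis using C[of j] Suc by simp
  qed (simp add: tau_0)
  moreover have "filterlim (\<lambda>k. C * real k) at_top sequentially"
    using \<open>C > 0\<close> by (intro filterlim_tendsto_pos_mult_at_top[OF tendsto_const] filterlim_real_sequentially)
  ultimately show ?thesis by (auto intro: filterlim_at_top_mono)
qed

lemma f_y_tendsto: "(\<lambda>n. f (y n)) \<longlonglongrightarrow> f xmin"
proof (rule tendsto_sandwich[of "\<lambda>_. f xmin" _ _ "\<lambda>n. f xmin + R\<^sup>2 / 2 / tau n"])
  have "f (y (Suc n)) \<le> f xmin + R\<^sup>2 / 2 / tau (Suc n)" for n
    using f_y_gap_le[of "Suc n"] tau_Suc_pos[of n] by (simp add: field_simps)
  then show "eventually (\<lambda>n. f (y n) \<le> f xmin + R\<^sup>2 / 2 / tau n) sequentially"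
    by (subst eventually_sequentially_Suc[symmetric]) simp
  have "(\<lambda>n. R\<^sup>2 / 2 / tau n) \<longlonglongrightarrow> 0"
    using tau_tendsto_at_top by (intro tendsto_divide_0[OF tendsto_const] filterlim_at_top_imp_at_infinity)
  then show "(\<lambda>n. f xmin + R\<^sup>2 / 2 / tau n) \<longlonglongrightarrow> f xmin"
    using tendsto_add[OF tendsto_const] by fastforce
qed (auto simp: xmin_le)

lemma fejer_monotone:
  assumes "\<forall>u. f w \<le> f u" and "k \<le> n"
  shows "norm (y n - w) \<le> norm (y k - w)"
  using \<open>k \<le> n\<close>
proof (induction n rule: dec_induct)
  case (step n)
  have "0 \<le> lam n * (f (y (Suc n)) - f w)" using assms lam_pos[of n] by simp
  then have "(norm (y (Suc n) - w))\<^sup>2 \<le> (norm (y n - w))\<^sup>2"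
    using three_point[of n w] zero_le_power2[of "norm (y n - y (Suc n))"] by argo
  then show ?case using step.IH by (meson norm_ge_zero power2_le_imp_le order_trans)
qed simp

lemma y_weak_conv: "\<exists>z. (\<forall>u. f z \<le> f u) \<and> weak_conv y z"
proof (rule tail_hull_opial)
  have "norm (y k) \<le> norm xmin + R" for k
    using norm_triangle_sub[of "y k" xmin] fejer_monotone[of xmin 0 k] xmin_le unfolding R_def by fastforce
  then show "bounded (range y)" by (auto intro: boundedI)
  show "convergent (\<lambda>k. (norm (y k - w))\<^sup>2)" if "\<forall>u. f w \<le> f u" for w
  proof -
    have "decseq (\<lambda>k. (norm (y k - w))\<^sup>2)"
      using fejer_monotone[OF that] by (auto simp: decseq_def intro: power_mono)
    then obtain L where "(\<lambda>k. (norm (y k - w))\<^sup>2) \<longlonglongrightarrow> L"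
      using decseq_convergent[of _ 0] by (metis zero_le_power2)
    then show ?thesis by (auto simp: convergent_def)
  qed
  show "\<forall>u. f w \<le> f u" if "\<And>n. w \<in> tail_hull y n" for w
  proof -
    have "tail_hull y n \<subseteq> {v. f v \<le> f (y n)}" for n
      using f_y_antimono
      by (intro tail_hull_subset closed_Collect_le f_continuous continuous_on_const convex_sublevel convex)
        auto
    then have "f w \<le> f (y n)" for n using that by blast
    then have "f w \<le> f xmin" by (intro LIMSEQ_le_const[OF f_y_tendsto]) auto
    then show ?thesis using xmin_le order_trans by blast
  qed
qed

lemma x_weak_conv: "\<exists>z. (\<forall>u. f z \<le> f u) \<and> weak_conv x z"
proof -
  obtain z where z: "\<forall>u. f z \<le> f u" "weak_conv y z" using y_weak_conv by blast
  have "(\<lambda>k. x k \<bullet> v) \<longlonglongrightarrow> z \<bullet> v" for v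
    by (rule weighted_average_tendsto[where b = "\<lambda>k. y k \<bullet> v", OF lam_pos tau_0 tau_Suc _ _ tau_tendsto_at_top])
      (use z(2) in \<open>simp_all add: x_Suc inner_add_left weak_conv_def\<close>)
  then show ?thesis using z(1) unfolding weak_conv_def by blast
qed

end

theorem mainTheorem15:
  fixes f :: "'a::{real_inner, complete_space} \<Rightarrow> real"
    and gradf :: "'a \<Rightarrow> 'a"
    and p :: real
    and x y :: "nat \<Rightarrow> 'a" and ym1 :: 'a
    and lam tau :: "nat \<Rightarrow> real"
  assumes convex: "convex_on UNIV f"
    and grad: "\<And>u. (f has_derivative (\<lambda>h. gradf u \<bullet> h)) (at u)"
    and grad_cont: "continuous_on UNIV gradf"
    and grad_lip: "\<And>B. bounded B \<Longrightarrow> \<exists>L. \<forall>u\<in>B. \<forall>v\<in>B. norm (gradf u - gradf v) \<le> L * norm (u - v)"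
    and S_ne: "\<exists>z. \<forall>u. f z \<le> f u"
    and p: "p \<ge> 1"
    and y_init: "y 0 \<noteq> ym1"
    and lam_def: "\<And>k. lam k = norm (y k - (if k = 0 then ym1 else y (k - 1))) powr (- ((p - 1) / p))"
    and y_rec: "\<And>k. y (Suc k) = prox (lam k) f (y k)"
    and tau0: "tau 0 = 0"
    and tau_rec: "\<And>k. tau (Suc k) = tau k + lam k"
    and x_rec: "\<And>k. x (Suc k) = (1 - lam k / tau (Suc k)) *\<^sub>R x k + (lam k / tau (Suc k)) *\<^sub>R y (Suc k)"
    and grad_nz: "\<And>k. gradf (y k) \<noteq> 0"
  shows "(\<lambda>k. f (x k) - (INF u. f u)) \<in> O(\<lambda>k. real k powr (- (2 - 1 / p)))
         \<and> (\<exists>z. (\<forall>u. f z \<le> f u) \<and> weak_conv x z)"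
proof -
  interpret averaged_prox_scheme f gradf p x y ym1 lam tau
    using convex grad S_ne p y_init lam_def y_rec tau0 tau_rec x_rec grad_nz
    by unfold_locales auto
  show ?thesis using f_x_rate x_weak_conv by blast
qed

end
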